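(* Let $A \in \mathbb{R}^{m \times n}$ be the payoff matrix of a finite two-player zero-sum game with value $v^*$, and let $\{(x_t,y_t)\}_{t\in\mathbb{N}}$ together with $\{(\overline{x}_t,\overline{y}_t)\}_{t \in \mathbb{N}}$ be an anticipatory fictitious play (AFP) process for $A$ (defined in the context), with arbitrary choices among best responses when there are ties. Then $$\lim_{t\to\infty} \min \overline{x}_t^{\mathsf T} A = \lim_{t\to\infty} \max A\overline{y}_t = v^*,$$ i.e. the average strategies converge to a Nash equilibrium, and moreover $$\max A\overline{y}_t - \min \overline{x}_t^{\mathsf T} A = O\big(t^{-1/(m+n-2)}\big) \quad \text{for all } t \in \mathbb{N},$$ the same rate bound that holds for fictitious play.
   Context: A two-player zero-sum game is given by $A\in\mathbb{R}^{m\times n}$: if player 1 plays row $i$ and player 2 plays column $j$, payoffs are $(A_{i,j},-A_{i,j})$. $\Delta^k$ denotes the probability simplex in $\mathbb{R}^k$; strategies are $x\in\Delta^m$, $y\in\Delta^n$. For a vector $w$, $\max w$ and $\min w$ denote its largest and smallest entries. The value is $v^* = \max_{x\in\Delta^m}\min_{y\in\Delta^n} x^{\mathsf T}Ay$. $e_1,e_2,\dots$ denote standard basis vectors. Best response operators: $\texttt{BR}^1_A(y)=\{e_i\in\mathbb{R}^m : i\in\arg\max Ay\}$ and $\texttt{BR}^2_A(x)=\{e_j\in\mathbb{R}^n: j \in \arg\min x^{\mathsf T}A\}$. The AFP process: for some $i,j$, $x_1=\overline{x}_1=e_i$, $y_1=\overline{y}_1=e_j$, and for each $t\in\mathbb{N}$: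 $x'_{t+1}\in\texttt{BR}^1_A(\overline{y}_t)$, $y'_{t+1}\in\texttt{BR}^2_A(\overline{x}_t)$; $\overline{x}'_{t+1}=\tfrac{t}{t+1}\overline{x}_t+\tfrac{1}{t+1}x'_{t+1}$, $\overline{y}'_{t+1}=\tfrac{t}{t+1}\overline{y}_t+\tfrac{1}{t+1}y'_{t+1}$; $x_{t+1}\in\texttt{BR}^1_A(\overline{y}'_{t+1})$, $y_{t+1}\in\texttt{BR}^2_A(\overline{x}'_{t+1})$; $\overline{x}_{t+1}=\tfrac{1}{t+1}\sum_{k=1}^{t+1}x_k$, $\overline{y}_{t+1}=\tfrac{1}{t+1}\sum_{k=1}^{t+1}y_k$. *)

theory Defs
  imports "HOL-Analysis.Analysis"
begin

definition vmax :: "real^'k \<Rightarrow> real" where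
  "vmax w = Max (range (\<lambda>i. w $ i))"

definition vmin :: "real^'k \<Rightarrow> real" where
  "vmin w = Min (range (\<lambda>i. w $ i))"

definition prob_simplex :: "(real^'k) set" where
  "prob_simplex = {x. (\<forall>i. 0 \<le> x $ i) \<and> (\<Sum>i\<in>UNIV. x $ i) = 1}"

definition game_value :: "real^'n^'m \<Rightarrow> real" where
  "game_value A = (SUP x\<in>(prob_simplex :: (real^'m) set). vmin (x v* A))"

definition BR1 :: "real^'n^'m \<Rightarrow> real^'n \<Rightarrow> (real^'m) set" where
  "BR1 A y = {axis i 1 | i. (A *v y) $ i = vmax (A *v y)}"

definition BR2 :: "real^'n^'m \<Rightarrow> real^'m \<Rightarrow> (real^'n) set" where
  "BR2 A x = {axis j 1 | j. (x v* A) $ j = vmin (x v* A)}"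

definition avg :: "(nat \<Rightarrow> real^'k) \<Rightarrow> nat \<Rightarrow> real^'k" where
  "avg z t = (1 / real t) *\<^sub>R (\<Sum>k=1..t. z k)"

text \<open>Anticipatory fictitious play process: x, y are the played pure strategies
  (indexed from 1), x', y' the anticipatory best responses.\<close>
definition is_AFP :: "real^'n^'m \<Rightarrow> (nat \<Rightarrow> real^'m) \<Rightarrow> (nat \<Rightarrow> real^'n)
    \<Rightarrow> (nat \<Rightarrow> real^'m) \<Rightarrow> (nat \<Rightarrow> real^'n) \<Rightarrow> bool" where
  "is_AFP A x y x' y' \<longleftrightarrow>
     (\<exists>i j. x 1 = axis i 1 \<and> y 1 = axis j 1) \<and>
     (\<forall>t\<ge>1.
        x' (t+1) \<in> BR1 A (avg y t) \<and>
        y' (t+1) \<in> BR2 A (avg x t) \<and>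
        x (t+1) \<in> BR1 A ((real t / real (t+1)) *\<^sub>R avg y t + (1 / real (t+1)) *\<^sub>R y' (t+1)) \<and>
        y (t+1) \<in> BR2 A ((real t / real (t+1)) *\<^sub>R avg x t + (1 / real (t+1)) *\<^sub>R x' (t+1)))"

end

theory Submission
  imports Defs
begin

text \<open>
  Let \<open>U\<^sub>t = A (y\<^sub>1 + \<dots> + y\<^sub>t)\<close> and \<open>V\<^sub>t = (x\<^sub>1 + \<dots> + x\<^sub>t)\<^sup>T A\<close> be the
  cumulative payoff vectors, so that the duality gap of the averages is \<open>(max U\<^sub>t - min V\<^sub>t) / t\<close>.
  Each AFP step adds a column of \<open>A\<close> to \<open>U\<close> and a row of \<open>A\<close> to \<open>V\<close>, and the row played at
  time \<open>t + 1\<close> is a best response to \<open>U\<^sub>t\<close> plus one column of \<open>A\<close>, hence a \<open>2 a0\<close>-optimal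
  response to \<open>U\<^sub>t\<close> when all entries of \<open>A\<close> are bounded by \<open>a0\<close> (and symmetrically for
  columns). Robinson's proof of convergence of fictitious play only uses these two properties: by
  induction on the number \<open>k\<close> of rows and columns, \<open>max U\<^sub>T - min V\<^sub>T = O(T\<^bsup>(k-3)/(k-2)\<^esup>)\<close>.
  In the induction step \<open>[0, T]\<close> is cut into windows of length about \<open>T\<^bsup>(k-2)/(k-1)\<^esup>\<close>; a window in
  which some strategy is never played is a vector system with fewer strategies, and a window in
  which all strategies are played brings the gap down to the order of its length. Dividing by
  \<open>t\<close> gives the rate \<open>t\<^bsup>-1/(m+n-2)\<^esup>\<close>, and weak duality traps the value between
  \<open>min x\<^sub>t\<^sup>T A\<close> and \<open>max A y\<^sub>t\<close>.
\<close>

section \<open>Vector systems\<close>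

text \<open>Robinson's vector systems, with best responses only required to be \<open>c\<close>-optimal.\<close>
definition vector_system :: "real \<Rightarrow> real \<Rightarrow> ('r \<Rightarrow> 'c \<Rightarrow> real) \<Rightarrow> 'r set \<Rightarrow> 'c set
    \<Rightarrow> (nat \<Rightarrow> 'r \<Rightarrow> real) \<Rightarrow> (nat \<Rightarrow> 'c \<Rightarrow> real) \<Rightarrow> (nat \<Rightarrow> 'r) \<Rightarrow> (nat \<Rightarrow> 'c) \<Rightarrow> nat \<Rightarrow> bool" where
  "vector_system a0 c a I J U V i j T \<longleftrightarrow> finite I \<and> finite J \<and> I \<noteq> {} \<and> J \<noteq> {} \<and>
     (\<forall>r\<in>I. \<forall>q\<in>J. \<bar>a r q\<bar> \<le> a0) \<and>
     (\<forall>\<tau><T. i \<tau> \<in> I \<and> j \<tau> \<in> J \<and>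
        (\<forall>r\<in>I. U (Suc \<tau>) r = U \<tau> r + a r (j \<tau>)) \<and>
        (\<forall>q\<in>J. V (Suc \<tau>) q = V \<tau> q + a (i \<tau>) q) \<and>
        (\<forall>r\<in>I. U \<tau> r \<le> U \<tau> (i \<tau>) + c) \<and>
        (\<forall>q\<in>J. V \<tau> (j \<tau>) \<le> V \<tau> q + c))"

definition system_gap :: "'r set \<Rightarrow> 'c set \<Rightarrow> ('r \<Rightarrow> real) \<Rightarrow> ('c \<Rightarrow> real) \<Rightarrow> real" where
  "system_gap I J u v = Max (u ` I) - Min (v ` J)"

lemma vector_system_finite:
  assumes "vector_system a0 c a I J U V i j T"
  shows "finite I" "finite J" "I \<noteq> {}" "J \<noteq> {}"
  using assms unfolding vector_system_def by blast+

lemma vector_system_boundD: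
  "vector_system a0 c a I J U V i j T \<Longrightarrow> r \<in> I \<Longrightarrow> q \<in> J \<Longrightarrow> \<bar>a r q\<bar> \<le> a0"
  unfolding vector_system_def by blast

lemma vector_system_stepD:
  assumes "vector_system a0 c a I J U V i j T" "\<tau> < T"
  shows "i \<tau> \<in> I" "j \<tau> \<in> J"
    and "r \<in> I \<Longrightarrow> U (Suc \<tau>) r = U \<tau> r + a r (j \<tau>)"
    and "q \<in> J \<Longrightarrow> V (Suc \<tau>) q = V \<tau> q + a (i \<tau>) q"
    and "r \<in> I \<Longrightarrow> U \<tau> r \<le> U \<tau> (i \<tau>) + c"
    and "q \<in> J \<Longrightarrow> V \<tau> (j \<tau>) \<le> V \<tau> q + c"
  using assms unfolding vector_system_def by auto

lemma vector_system_mono: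
  "vector_system a0 c a I J U V i j T \<Longrightarrow> T' \<le> T \<Longrightarrow> vector_system a0 c a I J U V i j T'"
  unfolding vector_system_def by auto

lemma vector_system_bound_nonneg: "vector_system a0 c a I J U V i j T \<Longrightarrow> 0 \<le> a0"
  unfolding vector_system_def by (meson abs_ge_zero all_not_in_conv order.trans)

lemma vector_system_transpose:
  "vector_system a0 c a I J U V i j T \<Longrightarrow>
   vector_system a0 c (\<lambda>q r. - a r q) J I (\<lambda>\<tau> q. - V \<tau> q) (\<lambda>\<tau> r. - U \<tau> r) j i T"
  unfolding vector_system_def by (auto simp: algebra_simps)

lemma Max_uminus_image:
  fixes f :: "'a \<Rightarrow> 'b::linordered_ab_group_add"
  shows "finite S \<Longrightarrow> S \<noteq> {} \<Longrightarrow> Max ((\<lambda>x. - f x) ` S) = - Min (f ` S)"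
  using minus_Min_eq_Max[of "f ` S"] by (simp add: image_image)

lemma system_gap_transpose:
  assumes "finite I" "finite J" "I \<noteq> {}" "J \<noteq> {}"
  shows "system_gap J I (\<lambda>q. - v q) (\<lambda>r. - u r) = system_gap I J u v"
proof -
  have "Min ((\<lambda>r. - u r) ` I) = - Max (u ` I)"
    using minus_Max_eq_Min[of "u ` I"] assms by (simp add: image_image)
  then show ?thesis unfolding system_gap_def Max_uminus_image[OF assms(2,4)] by simp
qed

lemma vector_system_U_eq_sum:
  assumes sys: "vector_system a0 c a I J U V i j T" and "\<tau> \<le> t" "t \<le> T" "r \<in> I"
  shows "U t r = U \<tau> r + (\<Sum>\<sigma>\<in>{\<tau>..<t}. a r (j \<sigma>))"
  using assms(2,3)
proof (induction t rule: dec_induct)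
  case (step t)
  then have "U (Suc t) r = U t r + a r (j t)"
    using vector_system_stepD(3)[OF sys _ \<open>r \<in> I\<close>] by simp
  then show ?case using step by simp
qed simp

lemma vector_system_V_eq_sum:
  assumes "vector_system a0 c a I J U V i j T" "\<tau> \<le> t" "t \<le> T" "q \<in> J"
  shows "V t q = V \<tau> q + (\<Sum>\<sigma>\<in>{\<tau>..<t}. a (i \<sigma>) q)"
  using vector_system_U_eq_sum[OF vector_system_transpose[OF assms(1)] assms(2-4)]
  by (simp add: sum_negf)

lemma vector_system_U_change:
  assumes sys: "vector_system a0 c a I J U V i j T" and "\<tau> \<le> t" "t \<le> T" "r \<in> I"
  shows "\<bar>U t r - U \<tau> r\<bar> \<le> a0 * (t - \<tau>)"
proof -
  have "\<bar>U t r - U \<tau> r\<bar> \<le> (\<Sum>\<sigma>\<in>{\<tau>..<t}. \<bar>a r (j \<sigma>)\<bar>)"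
    using vector_system_U_eq_sum[OF assms] by simp
  also have "\<dots> \<le> of_nat (card {\<tau>..<t}) * a0"
    using vector_system_boundD[OF sys \<open>r \<in> I\<close> vector_system_stepD(2)[OF sys]] \<open>t \<le> T\<close>
    by (intro sum_bounded_above) auto
  finally show ?thesis by (simp add: mult.commute)
qed

lemma Max_U_growth:
  assumes sys: "vector_system a0 c a I J U V i j T" and "\<tau> \<le> t" "t \<le> T"
  shows "Max (U t ` I) \<le> Max (U \<tau> ` I) + a0 * (t - \<tau>)"
proof -
  have "U t r \<le> Max (U \<tau> ` I) + a0 * (t - \<tau>)" if "r \<in> I" for r
  proof -
    have "U \<tau> r \<le> Max (U \<tau> ` I)" using vector_system_finite[OF sys] that by simp
    then show ?thesis using vector_system_U_change[OF assms that] by linarith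
  qed
  then show ?thesis using vector_system_finite[OF sys] by (intro Max.boundedI) auto
qed

lemma system_gap_growth:
  assumes sys: "vector_system a0 c a I J U V i j T" and "\<tau> \<le> t" "t \<le> T"
  shows "system_gap I J (U t) (V t) \<le> system_gap I J (U \<tau>) (V \<tau>) + 2 * a0 * (t - \<tau>)"
proof -
  have "Max ((\<lambda>q. - V t q) ` J) \<le> Max ((\<lambda>q. - V \<tau> q) ` J) + a0 * (t - \<tau>)"
    using Max_U_growth[OF vector_system_transpose[OF sys] assms(2,3)] .
  then show ?thesis using Max_U_growth[OF assms]
    unfolding system_gap_def Max_uminus_image[OF vector_system_finite(2,4)[OF sys]] by linarith
qed

lemma Max_U_le_played:
  assumes sys: "vector_system a0 c a I J U V i j T" and "\<tau> < T"
  shows "Max (U T ` I) \<le> U T (i \<tau>) + c + 2 * a0 * (T - \<tau>)"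
proof -
  note played = vector_system_stepD(1)[OF sys \<open>\<tau> < T\<close>]
    and opt = vector_system_stepD(5)[OF sys \<open>\<tau> < T\<close>]
  have "U T r \<le> U T (i \<tau>) + c + 2 * a0 * (T - \<tau>)" if "r \<in> I" for r
  proof -
    have "\<bar>U T r - U \<tau> r\<bar> \<le> a0 * (T - \<tau>)" "\<bar>U T (i \<tau>) - U \<tau> (i \<tau>)\<bar> \<le> a0 * (T - \<tau>)"
      using vector_system_U_change[OF sys _ _ that] vector_system_U_change[OF sys _ _ played]
        \<open>\<tau> < T\<close> by auto
    then show ?thesis using opt[OF that] by linarith
  qed
  then show ?thesis using vector_system_finite[OF sys] by (intro Max.boundedI) auto
qed

lemma Min_V_ge_played:
  assumes sys: "vector_system a0 c a I J U V i j T" and "\<tau> < T"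
  shows "V T (j \<tau>) - c - 2 * a0 * (T - \<tau>) \<le> Min (V T ` J)"
proof -
  have "Max ((\<lambda>q. - V T q) ` J) \<le> - V T (j \<tau>) + c + 2 * a0 * (T - \<tau>)"
    using Max_U_le_played[OF vector_system_transpose[OF sys] assms(2)] .
  then show ?thesis unfolding Max_uminus_image[OF vector_system_finite(2,4)[OF sys]] by linarith
qed

lemma vector_system_cross_terms_cancel:
  assumes sys: "vector_system a0 c a I J U V i j T"
  shows "(\<Sum>\<tau><T. U T (i \<tau>)) - (\<Sum>\<tau><T. V T (j \<tau>)) = (\<Sum>\<tau><T. U 0 (i \<tau>)) - (\<Sum>\<tau><T. V 0 (j \<tau>))"
proof -
  note played = vector_system_stepD(1,2)[OF sys]
  have "(\<Sum>\<tau><T. U T (i \<tau>)) = (\<Sum>\<tau><T. U 0 (i \<tau>) + (\<Sum>\<sigma><T. a (i \<tau>) (j \<sigma>)))"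
    using vector_system_U_eq_sum[OF sys, of 0 T] played by (intro sum.cong) (auto simp: atLeast0LessThan)
  moreover have "(\<Sum>\<sigma><T. V T (j \<sigma>)) = (\<Sum>\<sigma><T. V 0 (j \<sigma>) + (\<Sum>\<tau><T. a (i \<tau>) (j \<sigma>)))"
    using vector_system_V_eq_sum[OF sys, of 0 T] played by (intro sum.cong) (auto simp: atLeast0LessThan)
  moreover have "(\<Sum>\<sigma><T. \<Sum>\<tau><T. a (i \<tau>) (j \<sigma>)) = (\<Sum>\<tau><T. \<Sum>\<sigma><T. a (i \<tau>) (j \<sigma>))"
    by (rule sum.swap)
  ultimately show ?thesis by (simp add: sum.distrib)
qed

text \<open>Averaging the estimates of \<open>Max_U_le_played\<close> and \<open>Min_V_ge_played\<close> over the plays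
  \<open>\<tau> < T\<close>, the accumulated payoffs \<open>a (i \<tau>) (j \<sigma>)\<close> cancel.\<close>
lemma system_gap_le_if_all_played:
  assumes sys: "vector_system a0 c a I J U V i j T" and "s < T"
    and rows: "i ` {s..<T} = I" and cols: "j ` {s..<T} = J"
  shows "system_gap I J (U T) (V T) \<le> system_gap I J (U 0) (V 0) + 4 * a0 * (T - s) + 2 * c"
proof -
  note fin = vector_system_finite[OF sys]
  define K where "K = c + 2 * a0 * (T - s)"
  have slack: "a0 * (T - \<tau>) \<le> a0 * (T - s)" if "s \<le> \<tau>" for \<tau>
    using vector_system_bound_nonneg[OF sys] that by (intro mult_left_mono) auto
  have max_le: "Max (U T ` I) \<le> U T r + K" if "r \<in> I" for r
  proof -
    obtain \<tau> where "s \<le> \<tau>" "\<tau> < T" "r = i \<tau>" using rows \<open>r \<in> I\<close> by force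
    then show ?thesis using Max_U_le_played[OF sys \<open>\<tau> < T\<close>] slack[of \<tau>] unfolding K_def by simp
  qed
  have min_ge: "V T q - K \<le> Min (V T ` J)" if "q \<in> J" for q
  proof -
    obtain \<tau> where "s \<le> \<tau>" "\<tau> < T" "q = j \<tau>" using cols \<open>q \<in> J\<close> by force
    then show ?thesis using Min_V_ge_played[OF sys \<open>\<tau> < T\<close>] slack[of \<tau>] unfolding K_def by simp
  qed
  note played = vector_system_stepD(1,2)[OF sys]
  have "real T * system_gap I J (U T) (V T) = (\<Sum>\<tau><T. Max (U T ` I) - Min (V T ` J))"
    by (simp add: system_gap_def)
  also have "\<dots> \<le> (\<Sum>\<tau><T. U T (i \<tau>) - V T (j \<tau>) + 2 * K)"
  proof (intro sum_mono)
    fix \<tau> assume "\<tau> \<in> {..<T}"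
    then show "Max (U T ` I) - Min (V T ` J) \<le> U T (i \<tau>) - V T (j \<tau>) + 2 * K"
      using max_le[of "i \<tau>"] min_ge[of "j \<tau>"] played[of \<tau>] by simp
  qed
  also have "\<dots> = (\<Sum>\<tau><T. U 0 (i \<tau>) - V 0 (j \<tau>)) + real T * (2 * K)"
    using vector_system_cross_terms_cancel[OF sys] by (simp add: sum.distrib sum_subtractf)
  also have "\<dots> \<le> (\<Sum>\<tau><T. Max (U 0 ` I) - Min (V 0 ` J)) + real T * (2 * K)"
    using fin played by (intro add_right_mono sum_mono diff_mono) auto
  also have "\<dots> = real T * (system_gap I J (U 0) (V 0) + 2 * K)"
    by (simp add: system_gap_def algebra_simps)
  finally have "system_gap I J (U T) (V T) \<le> system_gap I J (U 0) (V 0) + 2 * K"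
    using \<open>s < T\<close> by (simp add: mult_le_cancel_left_pos)
  moreover have "2 * K = 4 * a0 * (T - s) + 2 * c" unfolding K_def by simp
  ultimately show ?thesis by linarith
qed

lemma vector_system_restrict_window:
  assumes sys: "vector_system a0 c a I J U V i j T" and "s + L \<le> T" "1 \<le> L"
  shows "vector_system a0 c a (i ` {s..<s+L}) (j ` {s..<s+L}) (\<lambda>\<tau>. U (s+\<tau>)) (\<lambda>\<tau>. V (s+\<tau>))
           (\<lambda>\<tau>. i (s+\<tau>)) (\<lambda>\<tau>. j (s+\<tau>)) L"
proof -
  have sub: "i ` {s..<s+L} \<subseteq> I" "j ` {s..<s+L} \<subseteq> J"
    using vector_system_stepD(1,2)[OF sys] \<open>s + L \<le> T\<close> by auto
  have step: "s + \<tau> < T" if "\<tau> < L" for \<tau> using that \<open>s + L \<le> T\<close> by simp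
  show ?thesis
    unfolding vector_system_def
  proof (intro conjI ballI allI impI)
    show "i ` {s..<s+L} \<noteq> {}" "j ` {s..<s+L} \<noteq> {}" using \<open>1 \<le> L\<close> by auto
  next
    fix r q assume "r \<in> i ` {s..<s + L}" "q \<in> j ` {s..<s + L}"
    then show "\<bar>a r q\<bar> \<le> a0" using sub vector_system_boundD[OF sys] by blast
  next
    fix \<tau> assume "\<tau> < L"
    then show "i (s + \<tau>) \<in> i ` {s..<s + L}" "j (s + \<tau>) \<in> j ` {s..<s + L}" by auto
    fix r assume "r \<in> i ` {s..<s + L}"
    then have "r \<in> I" using sub by blast
    then show "U (s + Suc \<tau>) r = U (s + \<tau>) r + a r (j (s + \<tau>))"
      and "U (s + \<tau>) r \<le> U (s + \<tau>) (i (s + \<tau>)) + c"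
      using vector_system_stepD[OF sys step[OF \<open>\<tau> < L\<close>]] by simp_all
  next
    fix \<tau> q assume "\<tau> < L" "q \<in> j ` {s..<s + L}"
    then have "q \<in> J" using sub by blast
    then show "V (s + Suc \<tau>) q = V (s + \<tau>) q + a (i (s + \<tau>)) q"
      and "V (s + \<tau>) (j (s + \<tau>)) \<le> V (s + \<tau>) q + c"
      using vector_system_stepD[OF sys step[OF \<open>\<tau> < L\<close>]] by simp_all
  qed auto
qed

lemma system_gap_restrict_window:
  assumes sys: "vector_system a0 c a I J U V i j T" and "s + L \<le> T" "1 \<le> L"
  defines "I' \<equiv> i ` {s..<s+L}" and "J' \<equiv> j ` {s..<s+L}"
  shows "system_gap I J (U (s+L)) (V (s+L)) - system_gap I J (U s) (V s)
    \<le> system_gap I' J' (U (s+L)) (V (s+L)) - system_gap I' J' (U s) (V s) + 2 * c + 4 * a0"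
proof -
  note fin = vector_system_finite[OF sys]
  define \<tau> where "\<tau> = s + L - 1"
  have \<tau>: "\<tau> \<in> {s..<s+L}" "\<tau> < s + L" "s + L - \<tau> = 1"
    using assms(3) unfolding \<tau>_def by auto
  note sys' = vector_system_mono[OF sys \<open>s + L \<le> T\<close>]
  have sub: "I' \<subseteq> I" "J' \<subseteq> J" and ne: "I' \<noteq> {}" "J' \<noteq> {}"
    using vector_system_stepD(1,2)[OF sys] assms(2,3) unfolding I'_def J'_def by auto
  have "Max (U s ` I') \<le> Max (U s ` I)" "Min (V s ` J) \<le> Min (V s ` J')"
    using sub ne fin by (intro Max_mono Min_antimono image_mono; simp)+
  moreover have "Max (U (s+L) ` I) \<le> Max (U (s+L) ` I') + c + 2 * a0"
    using Max_U_le_played[OF sys' \<tau>(2)] \<tau> unfolding I'_def by (auto intro: order_trans)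
  moreover have "Min (V (s+L) ` J') \<le> V (s+L) (j \<tau>)"
    using \<tau> unfolding J'_def by (intro Min_le) auto
  then have "Min (V (s+L) ` J') - c - 2 * a0 \<le> Min (V (s+L) ` J)"
    using Min_V_ge_played[OF sys' \<tau>(2)] \<tau>(3) by simp
  ultimately show ?thesis unfolding system_gap_def by linarith
qed

section \<open>Robinson's induction\<close>

definition gap_growth_bound :: "real \<Rightarrow> real \<Rightarrow> ('r \<Rightarrow> 'c \<Rightarrow> real) \<Rightarrow> nat \<Rightarrow> real \<Rightarrow> real \<Rightarrow> bool" where
  "gap_growth_bound a0 c a k C \<beta> \<longleftrightarrow>
     (\<forall>(I::'r set) (J::'c set) U V i j T. vector_system a0 c a I J U V i j T \<longrightarrow>
        card I + card J \<le> k \<longrightarrow> 1 \<le> T \<longrightarrow>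
        system_gap I J (U T) (V T) \<le> system_gap I J (U 0) (V 0) + C * real T powr \<beta>)"

text \<open>Either every row and column is played during the window, or the window is a vector system
  with fewer rows and columns.\<close>
lemma system_gap_window:
  assumes sys: "vector_system a0 c a I J U V i j T" and "s + L \<le> T" "1 \<le> L"
    and "card I + card J \<le> Suc k" and IH: "gap_growth_bound a0 c a k C \<beta>"
  shows "system_gap I J (U (s+L)) (V (s+L)) \<le> system_gap I J (U 0) (V 0) + 4 * a0 * L + 2 * c
    \<or> system_gap I J (U (s+L)) (V (s+L)) \<le> system_gap I J (U s) (V s) + C * L powr \<beta> + 2 * c + 4 * a0"
proof (cases "i ` {s..<s+L} = I \<and> j ` {s..<s+L} = J")
  case True
  have "system_gap I J (U (s+L)) (V (s+L)) \<le> system_gap I J (U 0) (V 0) + 4 * a0 * (s + L - s) + 2 * c"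
    by (rule system_gap_le_if_all_played[OF vector_system_mono[OF sys \<open>s + L \<le> T\<close>]])
      (use True \<open>1 \<le> L\<close> in auto)
  then show ?thesis by simp
next
  case False
  note fin = vector_system_finite[OF sys]
  have sub: "i ` {s..<s+L} \<subseteq> I" "j ` {s..<s+L} \<subseteq> J"
    using vector_system_stepD(1,2)[OF sys] \<open>s + L \<le> T\<close> by auto
  then have "card (i ` {s..<s+L}) \<le> card I" "card (j ` {s..<s+L}) \<le> card J"
    and "card (i ` {s..<s+L}) < card I \<or> card (j ` {s..<s+L}) < card J"
    using False fin by (auto intro: card_mono psubset_card_mono)
  then have "card (i ` {s..<s+L}) + card (j ` {s..<s+L}) \<le> k"
    using \<open>card I + card J \<le> Suc k\<close> by linarith
  then have "system_gap (i ` {s..<s+L}) (j ` {s..<s+L}) (U (s+L)) (V (s+L))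
      \<le> system_gap (i ` {s..<s+L}) (j ` {s..<s+L}) (U s) (V s) + C * L powr \<beta>"
    using IH vector_system_restrict_window[OF sys \<open>s + L \<le> T\<close> \<open>1 \<le> L\<close>] \<open>1 \<le> L\<close>
    unfolding gap_growth_bound_def by fastforce
  then show ?thesis
    using system_gap_restrict_window[OF sys \<open>s + L \<le> T\<close> \<open>1 \<le> L\<close>] by linarith
qed

lemma sum_if_le_last_occurrence:
  fixes d B :: real
  assumes "\<And>t. t < T \<Longrightarrow> P t \<Longrightarrow> real t * d \<le> B"
  shows "(\<Sum>\<sigma><T. if P \<sigma> then d else 0) \<le> max 0 (B + d)"
proof (cases "d \<le> 0 \<or> {\<sigma>. \<sigma> < T \<and> P \<sigma>} = {}")
  case True
  then have "(\<Sum>\<sigma><T. if P \<sigma> then d else 0) \<le> (\<Sum>\<sigma><T. 0)"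
    by (intro sum_mono) auto
  then show ?thesis by simp
next
  case False
  define S where "S = {\<sigma>. \<sigma> < T \<and> P \<sigma>}"
  define t where "t = Max S"
  have "finite S" "S \<noteq> {}" using False unfolding S_def by auto
  then have "t \<in> S" "S \<subseteq> {..t}" unfolding t_def by auto
  then have "card S \<le> Suc t" using card_mono[of "{..t}" S] by simp
  have "(\<Sum>\<sigma><T. if P \<sigma> then d else 0) = real (card S) * d"
    unfolding S_def by (simp add: sum.If_cases Int_def)
  also have "\<dots> \<le> real (Suc t) * d"
    using \<open>card S \<le> Suc t\<close> False by (intro mult_right_mono) auto
  also have "\<dots> \<le> B + d" using assms \<open>t \<in> S\<close> unfolding S_def by (simp add: algebra_simps)
  finally show ?thesis by simp
qed

lemma single_row_V_linear:
  assumes sys: "vector_system a0 c a {r0} J U V i j T" and "t \<le> T" "q \<in> J"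
  shows "V t q = V 0 q + real t * a r0 q"
proof -
  have "(\<Sum>\<sigma>\<in>{0..<t}. a (i \<sigma>) q) = (\<Sum>\<sigma>\<in>{0..<t}. a r0 q)"
    using vector_system_stepD(1)[OF sys] \<open>t \<le> T\<close> by (intro sum.cong) auto
  then show ?thesis using vector_system_V_eq_sum[OF sys _ assms(2,3), of 0] by simp
qed

text \<open>With a single row, \<open>V\<close> grows linearly, so the column that is worse in the long run
  is \<open>c\<close>-optimal, and can be played, only up to a time inversely proportional to its disadvantage.\<close>
lemma single_row_payoff_bound:
  assumes sys: "vector_system a0 c a {r0} J U V i j T" and "0 \<le> c"
    and "q \<in> J" "q' \<in> J" "J \<subseteq> {q, q'}"
  shows "(\<Sum>\<sigma><T. a r0 (j \<sigma>)) - real T * a r0 q \<le> V 0 q - Min (V 0 ` J) + c + 2 * a0"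
proof -
  have cols: "\<tau> < T \<Longrightarrow> j \<tau> \<in> {q, q'}" for \<tau>
    using vector_system_stepD(2)[OF sys] \<open>J \<subseteq> {q, q'}\<close> by blast
  note linear = single_row_V_linear[OF sys]
  define d where "d = a r0 q' - a r0 q"
  have "(\<Sum>\<sigma><T. a r0 (j \<sigma>)) - real T * a r0 q = (\<Sum>\<sigma><T. a r0 (j \<sigma>) - a r0 q)"
    by (simp add: sum_subtractf)
  also have "\<dots> = (\<Sum>\<sigma><T. if j \<sigma> = q' then d else 0)"
    using cols unfolding d_def by (intro sum.cong) auto
  also have "\<dots> \<le> max 0 (V 0 q - V 0 q' + c + d)"
  proof (rule sum_if_le_last_occurrence)
    fix t assume "t < T" "j t = q'"
    then have "V t q' \<le> V t q + c"
      using vector_system_stepD(6)[OF sys \<open>t < T\<close> \<open>q \<in> J\<close>] by simp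
    then show "real t * d \<le> V 0 q - V 0 q' + c"
      using linear[of t q] linear[of t q'] \<open>t < T\<close> \<open>q \<in> J\<close> \<open>q' \<in> J\<close> unfolding d_def
      by (simp add: algebra_simps)
  qed
  also have "\<dots> \<le> V 0 q - Min (V 0 ` J) + c + 2 * a0"
  proof -
    have "Min (V 0 ` J) \<le> V 0 q'" "Min (V 0 ` J) \<le> V 0 q"
      using \<open>q \<in> J\<close> \<open>q' \<in> J\<close> vector_system_finite[OF sys] by auto
    moreover have "\<bar>a r0 q\<bar> \<le> a0" "\<bar>a r0 q'\<bar> \<le> a0"
      using vector_system_boundD[OF sys] \<open>q \<in> J\<close> \<open>q' \<in> J\<close> by auto
    ultimately show ?thesis using \<open>0 \<le> c\<close> unfolding d_def by linarith
  qed
  finally show ?thesis .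
qed

lemma card_le_2_subset_pair:
  assumes "finite J" "card J \<le> 2" "q \<in> J"
  obtains q' where "q' \<in> J" "J \<subseteq> {q, q'}"
proof -
  have "card (J - {q}) \<le> Suc 0" using assms by simp
  then have unique: "\<forall>x\<in>J - {q}. \<forall>y\<in>J - {q}. x = y"
    using card_le_Suc0_iff_eq[of "J - {q}"] assms(1) by simp
  show ?thesis
  proof (cases "J - {q} = {}")
    case True
    then have "J \<subseteq> {q, q}" by auto
    then show ?thesis using that \<open>q \<in> J\<close> by simp
  next
    case False
    then obtain q' where q': "q' \<in> J" "q' \<noteq> q" by auto
    then have "J \<subseteq> {q, q'}" using unique by auto
    then show ?thesis using that q' by simp
  qed
qed

lemma system_gap_single_row:
  assumes sys: "vector_system a0 c a {r0} J U V i j T" and "card J \<le> 2" "0 \<le> c"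
  shows "system_gap {r0} J (U T) (V T) \<le> system_gap {r0} J (U 0) (V 0) + c + 2 * a0"
proof -
  note fin = vector_system_finite[OF sys]
  have "Min (V T ` J) \<in> V T ` J" using fin by simp
  then obtain q where q: "q \<in> J" "Min (V T ` J) = V T q" by auto
  obtain q' where "q' \<in> J" "J \<subseteq> {q, q'}"
    using card_le_2_subset_pair[OF fin(2) \<open>card J \<le> 2\<close> \<open>q \<in> J\<close>] .
  have "U T r0 = U 0 r0 + (\<Sum>\<sigma><T. a r0 (j \<sigma>))"
    using vector_system_U_eq_sum[OF sys, of 0 T r0] by (simp add: atLeast0LessThan)
  moreover have "V T q = V 0 q + real T * a r0 q"
    using single_row_V_linear[OF sys order.refl q(1)] .
  ultimately have "system_gap {r0} J (U T) (V T)
      = U 0 r0 + ((\<Sum>\<sigma><T. a r0 (j \<sigma>)) - real T * a r0 q) - V 0 q"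
    unfolding system_gap_def q(2) by simp
  also have "\<dots> \<le> U 0 r0 - Min (V 0 ` J) + c + 2 * a0"
    using single_row_payoff_bound[OF sys \<open>0 \<le> c\<close> q(1) \<open>q' \<in> J\<close> \<open>J \<subseteq> {q, q'}\<close>] by linarith
  finally show ?thesis unfolding system_gap_def by simp
qed

lemma gap_growth_bound_3:
  assumes "0 \<le> c"
  shows "gap_growth_bound a0 c a 3 (c + 2 * a0) 0"
  unfolding gap_growth_bound_def
proof (intro allI impI)
  fix I J U V i j T
  assume sys: "vector_system a0 c a I J U V i j T" and card: "card I + card J \<le> 3" and "1 \<le> T"
  note fin = vector_system_finite[OF sys]
  then have "card I \<ge> 1" "card J \<ge> 1" by (auto simp: Suc_le_eq card_gt_0_iff)
  then consider "card I = 1" "card J \<le> 2" | "card J = 1" "card I \<le> 2" using card by linarith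
  then have "system_gap I J (U T) (V T) \<le> system_gap I J (U 0) (V 0) + c + 2 * a0"
  proof cases
    case 1
    then obtain r0 where I: "I = {r0}" by (auto simp: card_1_singleton_iff)
    show ?thesis
      unfolding I by (rule system_gap_single_row[OF sys[unfolded I] \<open>card J \<le> 2\<close> \<open>0 \<le> c\<close>])
  next
    case 2
    then obtain q0 where J: "J = {q0}" by (auto simp: card_1_singleton_iff)
    have "system_gap {q0} I (\<lambda>q. - V T q) (\<lambda>r. - U T r)
        \<le> system_gap {q0} I (\<lambda>q. - V 0 q) (\<lambda>r. - U 0 r) + c + 2 * a0"
      by (rule system_gap_single_row[OF vector_system_transpose[OF sys[unfolded J]] \<open>card I \<le> 2\<close> \<open>0 \<le> c\<close>])
    then show ?thesis unfolding J system_gap_transpose[OF fin[unfolded J]] .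
  qed
  then show "system_gap I J (U T) (V T) \<le> system_gap I J (U 0) (V 0) + (c + 2 * a0) * real T powr 0"
    using \<open>1 \<le> T\<close> by simp
qed

lemma bound_by_windows:
  fixes g :: "nat \<Rightarrow> real"
  assumes "1 \<le> L" "0 \<le> E" "0 \<le> M"
    and start: "\<And>n. n \<le> T \<Longrightarrow> n < L \<Longrightarrow> g n \<le> g 0 + M"
    and window: "\<And>s. s + L \<le> T \<Longrightarrow> g (s + L) \<le> g 0 + M \<or> g (s + L) \<le> g s + E"
  shows "g T \<le> g 0 + M + real (T div L) * E"
proof -
  have "n \<le> T \<Longrightarrow> g n \<le> g 0 + M + real (n div L) * E" for n
  proof (induction n rule: less_induct)
    case (less n)
    show ?case
    proof (cases "n < L")
      case True
      then show ?thesis using start[OF \<open>n \<le> T\<close>] \<open>0 \<le> E\<close> by simp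
    next
      case False
      then obtain s where n: "n = s + L" by (metis add.commute le_Suc_ex not_less)
      then have "s < n" "n div L = Suc (s div L)" using \<open>1 \<le> L\<close> by auto
      then have "g s \<le> g 0 + M + real (n div L) * E - E"
        using less.IH[of s] \<open>n \<le> T\<close> by (simp add: algebra_simps)
      then show ?thesis
        using window[of s] n \<open>n \<le> T\<close> \<open>0 \<le> E\<close> by (auto intro: order_trans)
    qed
  qed
  then show ?thesis by simp
qed

lemma window_length_estimates:
  fixes T L :: nat and \<beta> \<gamma> :: real
  assumes "1 \<le> T" "0 \<le> \<beta>" "\<beta> \<le> 1" and \<gamma>: "\<gamma> = 1 / (2 - \<beta>)" and L: "L = nat \<lceil>T powr \<gamma>\<rceil>"
  shows "1 \<le> T powr \<gamma>" "1 \<le> L" "L \<le> 2 * T powr \<gamma>"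
    and "T / L \<le> T powr \<gamma>" "T / L * L powr \<beta> \<le> T powr \<gamma>"
proof -
  have "1 / 2 \<le> \<gamma>" "\<gamma> \<le> 1" and \<gamma>_eq: "1 + \<gamma> * (\<beta> - 1) = \<gamma>"
    using assms(2,3) unfolding \<gamma> by (auto simp: field_simps)
  show Tg: "1 \<le> T powr \<gamma>" using \<open>1 \<le> T\<close> \<open>1 / 2 \<le> \<gamma>\<close> by (intro ge_one_powr_ge_zero) auto
  have "T powr \<gamma> \<le> L" "L \<le> T powr \<gamma> + 1" unfolding L using Tg by linarith+
  then show "1 \<le> L" "L \<le> 2 * T powr \<gamma>" using Tg by linarith+
  have "T / L \<le> T / T powr \<gamma>"
    using \<open>T powr \<gamma> \<le> L\<close> Tg \<open>1 \<le> T\<close> by (intro divide_left_mono) (auto simp: zero_less_mult_iff)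
  also have "\<dots> = T powr (1 - \<gamma>)" using \<open>1 \<le> T\<close> by (simp add: powr_diff)
  also have "\<dots> \<le> T powr \<gamma>" using \<open>1 / 2 \<le> \<gamma>\<close> \<open>1 \<le> T\<close> by (intro powr_mono) auto
  finally show "T / L \<le> T powr \<gamma>" .
  have "T / L * L powr \<beta> = T * L powr (\<beta> - 1)"
    using \<open>1 \<le> L\<close> by (simp add: powr_diff)
  also have "\<dots> \<le> T * (T powr \<gamma>) powr (\<beta> - 1)"
    using \<open>T powr \<gamma> \<le> L\<close> Tg \<open>\<beta> \<le> 1\<close> \<open>1 \<le> T\<close> by (intro mult_left_mono powr_mono2') auto
  also have "\<dots> = T powr (1 + \<gamma> * (\<beta> - 1))"
    using \<open>1 \<le> T\<close> by (simp add: powr_powr powr_add)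
  finally show "T / L * L powr \<beta> \<le> T powr \<gamma>" unfolding \<gamma>_eq .
qed

lemma window_budget:
  fixes T L :: nat and \<beta> \<gamma> C c a0 :: real
  assumes "1 \<le> T" "0 \<le> \<beta>" "\<beta> \<le> 1" "\<gamma> = 1 / (2 - \<beta>)" "L = nat \<lceil>T powr \<gamma>\<rceil>"
    and "0 \<le> C" "0 \<le> c" "0 \<le> a0"
  shows "4 * a0 * L + 2 * c + real (T div L) * (C * L powr \<beta> + 2 * c + 4 * a0)
    \<le> (12 * a0 + 4 * c + C) * T powr \<gamma>"
proof -
  note est = window_length_estimates[OF assms(1-5)]
  have "real (T div L) * (C * L powr \<beta> + 2 * c + 4 * a0) \<le> T / L * (C * L powr \<beta> + 2 * c + 4 * a0)"
    using assms(6-8) by (intro mult_right_mono of_nat_div_le_of_nat) auto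
  also have "\<dots> = C * (T / L * L powr \<beta>) + (2 * c + 4 * a0) * (T / L)"
    by (simp add: algebra_simps)
  also have "\<dots> \<le> C * T powr \<gamma> + (2 * c + 4 * a0) * T powr \<gamma>"
    using est(4,5) assms(6-8) by (intro add_mono mult_left_mono) auto
  moreover have "4 * a0 * L \<le> 4 * a0 * (2 * T powr \<gamma>)" "2 * c * 1 \<le> 2 * c * T powr \<gamma>"
    using est(1,3) assms(7,8) by (intro mult_left_mono; simp)+
  ultimately show ?thesis by (simp add: algebra_simps)
qed

text \<open>Robinson's induction step: cut \<open>[0, T]\<close> into windows of length \<open>L \<approx> T\<^sup>\<gamma>\<close>. The gap
  grows by \<open>O(L\<^sup>\<beta>)\<close> in each window with an unplayed strategy, and is reset to \<open>O(L)\<close> by every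
  window in which all strategies are played.\<close>
lemma gap_growth_bound_Suc:
  assumes IH: "gap_growth_bound a0 c a k C \<beta>"
    and "0 \<le> C" "0 \<le> \<beta>" "\<beta> \<le> 1" "0 \<le> c" "0 \<le> a0"
  shows "gap_growth_bound a0 c a (Suc k) (12 * a0 + 4 * c + C) (1 / (2 - \<beta>))"
  unfolding gap_growth_bound_def
proof (intro allI impI)
  fix I J U V i j T
  assume sys: "vector_system a0 c a I J U V i j T" and card: "card I + card J \<le> Suc k" and "1 \<le> T"
  define \<gamma> where "\<gamma> = 1 / (2 - \<beta>)"
  define L where "L = nat \<lceil>T powr \<gamma>\<rceil>"
  define g where "g n = system_gap I J (U n) (V n)" for n
  define E where "E = C * L powr \<beta> + 2 * c + 4 * a0"
  define M where "M = 4 * a0 * L + 2 * c"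
  have "0 \<le> E" "0 \<le> M" using assms(2,5,6) unfolding E_def M_def by auto
  note est = window_length_estimates[OF \<open>1 \<le> T\<close> \<open>0 \<le> \<beta>\<close> \<open>\<beta> \<le> 1\<close> \<gamma>_def L_def]
  have "g T \<le> g 0 + M + real (T div L) * E"
  proof (rule bound_by_windows)
    show "1 \<le> L" "0 \<le> E" "0 \<le> M" by fact+
  next
    fix n assume "n \<le> T" "n < L"
    then have "2 * a0 * n \<le> 4 * a0 * L" using \<open>0 \<le> a0\<close> by (intro mult_mono) auto
    then show "g n \<le> g 0 + M"
      using system_gap_growth[OF sys _ \<open>n \<le> T\<close>, of 0] \<open>0 \<le> c\<close> unfolding g_def M_def by simp
  next
    fix s assume "s + L \<le> T"
    then show "g (s + L) \<le> g 0 + M \<or> g (s + L) \<le> g s + E"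
      using system_gap_window[OF sys \<open>s + L \<le> T\<close> est(2) card IH] unfolding g_def E_def M_def
      by (simp add: add.assoc)
  qed
  moreover have "M + real (T div L) * E \<le> (12 * a0 + 4 * c + C) * T powr \<gamma>"
    unfolding M_def E_def by (rule window_budget[OF \<open>1 \<le> T\<close> \<open>0 \<le> \<beta>\<close> \<open>\<beta> \<le> 1\<close> \<gamma>_def L_def assms(2,5,6)])
  ultimately show "g T \<le> g 0 + (12 * a0 + 4 * c + C) * T powr (1 / (2 - \<beta>))"
    unfolding \<gamma>_def by linarith
qed

lemma gap_growth_bound_exists:
  assumes "0 \<le> c" "0 \<le> a0" "3 \<le> k"
  shows "\<exists>C\<ge>0. gap_growth_bound a0 c a k C ((real k - 3) / (real k - 2))"
  using \<open>3 \<le> k\<close>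
proof (induction k rule: dec_induct)
  case base
  show ?case using gap_growth_bound_3[OF \<open>0 \<le> c\<close>] assms(1,2) by (intro exI[of _ "c + 2 * a0"]) simp
next
  case (step k)
  then obtain C where "0 \<le> C" and IH: "gap_growth_bound a0 c a k C ((real k - 3) / (real k - 2))"
    by blast
  have "0 \<le> (real k - 3) / (real k - 2)" "(real k - 3) / (real k - 2) \<le> 1"
    and "1 / (2 - (real k - 3) / (real k - 2)) = (real (Suc k) - 3) / (real (Suc k) - 2)"
    using \<open>3 \<le> k\<close> by (auto simp: field_simps)
  then show ?case
    using gap_growth_bound_Suc[OF IH \<open>0 \<le> C\<close> _ _ assms(1,2)] \<open>0 \<le> C\<close> assms(1,2)
    by (metis add_nonneg_nonneg mult_nonneg_nonneg zero_le_numeral)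
qed

lemma matrix_vector_mult_axis_nth: "((A :: real^'n^'m) *v axis j 1) $ r = A $ r $ j"
  by (simp add: matrix_vector_mult_basis column_def)

lemma vector_matrix_mult_axis_nth: "(axis i 1 v* (A :: real^'n^'m)) $ q = A $ i $ q"
  using matrix_vector_mult_axis_nth[of "transpose A" i q]
  by (simp only: transpose_matrix_vector) (simp add: transpose_def)

lemma uminus_matrix_vector_mult: "(- A) *v x = - (A *v (x :: real^'n))"
  by (simp add: matrix_vector_mult_def vec_eq_iff sum_negf)

lemma vector_matrix_mult_scaleR: "(c *\<^sub>R x) v* (A :: real^'n^'m) = c *\<^sub>R (x v* A)"
  using matrix_vector_mult_scaleR[of "transpose A" c x] by simp

lemma vmax_ge: "w $ i \<le> vmax w"
  unfolding vmax_def by (intro Max_ge) auto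

lemma vmin_le: "vmin w \<le> w $ i"
  unfolding vmin_def by (intro Min_le) auto

lemma vmax_uminus: "vmax (- w) = - vmin w"
  using minus_Min_eq_Max[of "range (\<lambda>i. w $ i)"] unfolding vmax_def vmin_def
  by (simp add: image_image)

lemma vmax_scaleR: "0 \<le> d \<Longrightarrow> vmax (d *\<^sub>R w) = d * vmax w"
  unfolding vmax_def using mono_Max_commute[of "\<lambda>z. d * z" "range (\<lambda>i. w $ i)"]
  by (simp add: image_image mono_def mult_left_mono)

lemma vmin_scaleR: "0 \<le> d \<Longrightarrow> vmin (d *\<^sub>R w) = d * vmin w"
  using vmax_scaleR[of d "- w"] by (simp add: vmax_uminus)

lemma BR2_eq_BR1_uminus_transpose: "BR2 A x = BR1 (- transpose A) x"
  unfolding BR1_def BR2_def uminus_matrix_vector_mult by (simp add: vmax_uminus)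

lemma BR1_eq_BR2_uminus_transpose: "BR1 A y = BR2 (- transpose A) y"
proof -
  have "- transpose (- transpose A) = A" by (simp add: transpose_def vec_eq_iff)
  then show ?thesis unfolding BR2_eq_BR1_uminus_transpose by simp
qed

lemma axis_in_BR1D: "axis i 1 \<in> BR1 A w \<Longrightarrow> (A *v w) $ r \<le> (A *v w) $ i"
  unfolding BR1_def using vmax_ge by (auto simp: axis_eq_axis)

text \<open>Responding to \<open>s\<close> plus one extra column changes each row's payoff by at most \<open>a0\<close>.\<close>
lemma axis_in_BR1_perturbed:
  assumes "axis i 1 \<in> BR1 A (d *\<^sub>R (s + axis j 1))" "0 < d" and bound: "\<And>r q. \<bar>A $ r $ q\<bar> \<le> a0"
  shows "(A *v s) $ r \<le> (A *v s) $ i + 2 * a0"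
proof -
  have "d * ((A *v s) $ r + A $ r $ j) \<le> d * ((A *v s) $ i + A $ i $ j)"
    using axis_in_BR1D[OF assms(1), of r]
    by (simp add: matrix_vector_mult_scaleR matrix_vector_right_distrib matrix_vector_mult_axis_nth)
  then have "(A *v s) $ r + A $ r $ j \<le> (A *v s) $ i + A $ i $ j"
    using \<open>0 < d\<close> by simp
  then show ?thesis using bound[of r j] bound[of i j] by linarith
qed

lemma anticipated_average:
  "(real t / real (t + 1)) *\<^sub>R avg z t + (1 / real (t + 1)) *\<^sub>R w
     = (1 / real (t + 1)) *\<^sub>R ((\<Sum>k=1..t. z k) + w)"
proof (cases "t = 0")
  case False
  then have "real t / real (t + 1) * (1 / real t) = 1 / real (t + 1)" by simp
  then show ?thesis unfolding avg_def by (simp add: scaleR_add_right)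
qed (simp add: avg_def)

section \<open>Anticipatory fictitious play as a vector system\<close>

lemma is_AFP_transpose: "is_AFP A x y x' y' \<Longrightarrow> is_AFP (- transpose A) y x y' x'"
  unfolding is_AFP_def BR2_eq_BR1_uminus_transpose[of A, symmetric]
    BR1_eq_BR2_uminus_transpose[of A, symmetric]
  by auto

lemma AFP_row_play_pure:
  assumes "is_AFP A x y x' y'"
  shows "\<exists>i. x (Suc t) = axis i 1"
proof (cases t)
  case 0
  then show ?thesis using assms unfolding is_AFP_def by auto
next
  case (Suc n)
  then have "x (t + 1) \<in> BR1 A ((real t / real (t + 1)) *\<^sub>R avg y t + (1 / real (t + 1)) *\<^sub>R y' (t + 1))"
    using assms unfolding is_AFP_def by auto
  then show ?thesis unfolding BR1_def by auto
qed

lemma AFP_plays_pure: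
  assumes "is_AFP A x y x' y'"
  obtains ii jj where "\<And>\<tau>. x (Suc \<tau>) = axis (ii \<tau>) 1" "\<And>\<tau>. y (Suc \<tau>) = axis (jj \<tau>) 1"
proof -
  have "\<forall>\<tau>. \<exists>i. x (Suc \<tau>) = axis i 1" "\<forall>\<tau>. \<exists>j. y (Suc \<tau>) = axis j 1"
    using AFP_row_play_pure[OF assms] AFP_row_play_pure[OF is_AFP_transpose[OF assms]] by blast+
  then show ?thesis using that by metis
qed

lemma AFP_row_slack:
  assumes AFP: "is_AFP A x y x' y'" and bound: "\<And>r q. \<bar>A $ r $ q\<bar> \<le> a0"
    and "x (Suc t) = axis i 1"
  shows "(A *v (\<Sum>k=1..t. y k)) $ r \<le> (A *v (\<Sum>k=1..t. y k)) $ i + 2 * a0"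
proof (cases "t = 0")
  case True
  have "0 \<le> a0" using bound by (meson abs_ge_zero order_trans)
  then show ?thesis using True by simp
next
  case False
  then have "y' (t + 1) \<in> BR2 A (avg x t)"
    and "x (t + 1) \<in> BR1 A ((real t / real (t + 1)) *\<^sub>R avg y t + (1 / real (t + 1)) *\<^sub>R y' (t + 1))"
    using AFP unfolding is_AFP_def by auto
  moreover obtain j where "y' (t + 1) = axis j 1" using calculation(1) unfolding BR2_def by auto
  ultimately have "axis i 1 \<in> BR1 A ((1 / real (t + 1)) *\<^sub>R ((\<Sum>k=1..t. y k) + axis j 1))"
    using \<open>x (Suc t) = axis i 1\<close> unfolding anticipated_average by simp
  then show ?thesis by (rule axis_in_BR1_perturbed) (use bound in auto)
qed

lemma AFP_vector_system:
  assumes AFP: "is_AFP A x y x' y'" and bound: "\<And>r q. \<bar>A $ r $ q\<bar> \<le> a0"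
    and rows: "\<And>\<tau>. x (Suc \<tau>) = axis (ii \<tau>) 1" and cols: "\<And>\<tau>. y (Suc \<tau>) = axis (jj \<tau>) 1"
  shows "vector_system a0 (2 * a0) (\<lambda>r q. A $ r $ q) UNIV UNIV
    (\<lambda>t r. (A *v (\<Sum>k=1..t. y k)) $ r) (\<lambda>t q. ((\<Sum>k=1..t. x k) v* A) $ q) ii jj T"
proof -
  have bound': "\<bar>(- transpose A) $ q $ r\<bar> \<le> a0" for q r
    by (simp add: transpose_def bound)
  have "((\<Sum>k=1..\<tau>. x k) v* A) $ jj \<tau> \<le> ((\<Sum>k=1..\<tau>. x k) v* A) $ q + 2 * a0" for \<tau> q
    using AFP_row_slack[OF is_AFP_transpose[OF AFP] bound' cols, of \<tau> q]
    by (simp add: uminus_matrix_vector_mult)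
  moreover have "(A *v (\<Sum>k=1..\<tau>. y k)) $ r \<le> (A *v (\<Sum>k=1..\<tau>. y k)) $ ii \<tau> + 2 * a0" for \<tau> r
    using AFP_row_slack[OF AFP bound rows] .
  ultimately show ?thesis
    unfolding vector_system_def
    by (simp add: bound rows cols matrix_vector_right_distrib vector_matrix_left_distrib
        matrix_vector_mult_axis_nth vector_matrix_mult_axis_nth)
qed

section \<open>Weak duality\<close>

lemma axis_in_prob_simplex: "axis i (1::real) \<in> prob_simplex"
  unfolding prob_simplex_def axis_def by simp

lemma avg_in_prob_simplex:
  assumes "1 \<le> t" and "\<And>k. 1 \<le> k \<Longrightarrow> k \<le> t \<Longrightarrow> z k \<in> prob_simplex"
  shows "avg z t \<in> prob_simplex"
proof -
  have z: "0 \<le> z k $ i" "(\<Sum>i\<in>UNIV. z k $ i) = 1" if "k \<in> {1..t}" for k i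
    using assms(2)[of k] that unfolding prob_simplex_def by auto
  have "(\<Sum>i\<in>UNIV. \<Sum>k=1..t. z k $ i) = (\<Sum>k=1..t. \<Sum>i\<in>UNIV. z k $ i)"
    by (rule sum.swap)
  also have "\<dots> = real t" using z(2) by simp
  finally have "(\<Sum>i\<in>UNIV. avg z t $ i) = 1"
    using \<open>1 \<le> t\<close> unfolding avg_def by (simp add: sum_divide_distrib[symmetric])
  moreover have "0 \<le> avg z t $ i" for i
    using z(1) unfolding avg_def by (auto intro!: divide_nonneg_nonneg sum_nonneg)
  ultimately show ?thesis unfolding prob_simplex_def by auto
qed

lemma AFP_avg_in_prob_simplex:
  assumes "is_AFP A x y x' y'" "1 \<le> t"
  shows "avg x t \<in> prob_simplex" "avg y t \<in> prob_simplex"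
proof -
  have "x k \<in> prob_simplex \<and> y k \<in> prob_simplex" if "1 \<le> k" for k
  proof -
    obtain i j where "x (Suc (k - 1)) = axis i 1" "y (Suc (k - 1)) = axis j 1"
      using AFP_row_play_pure[OF assms(1)] AFP_row_play_pure[OF is_AFP_transpose[OF assms(1)]] by metis
    then show ?thesis using that by (simp add: axis_in_prob_simplex)
  qed
  then show "avg x t \<in> prob_simplex" "avg y t \<in> prob_simplex"
    using \<open>1 \<le> t\<close> by (auto intro!: avg_in_prob_simplex)
qed

lemma prob_simplex_weighted_sum_bounds:
  assumes "p \<in> prob_simplex"
  shows "vmin w \<le> (\<Sum>i\<in>UNIV. p $ i * w $ i)" "(\<Sum>i\<in>UNIV. p $ i * w $ i) \<le> vmax w"
proof -
  have p: "0 \<le> p $ i" "(\<Sum>i\<in>UNIV. p $ i) = 1" for i using assms unfolding prob_simplex_def by auto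
  have "vmin w = (\<Sum>i\<in>UNIV. p $ i * vmin w)" using p by (simp add: sum_distrib_right[symmetric])
  also have "\<dots> \<le> (\<Sum>i\<in>UNIV. p $ i * w $ i)" using p by (intro sum_mono mult_left_mono vmin_le) auto
  finally show "vmin w \<le> (\<Sum>i\<in>UNIV. p $ i * w $ i)" .
  have "(\<Sum>i\<in>UNIV. p $ i * w $ i) \<le> (\<Sum>i\<in>UNIV. p $ i * vmax w)"
    using p by (intro sum_mono mult_left_mono vmax_ge) auto
  also have "\<dots> = vmax w" using p by (simp add: sum_distrib_right[symmetric])
  finally show "(\<Sum>i\<in>UNIV. p $ i * w $ i) \<le> vmax w" .
qed

lemma weak_duality:
  fixes A :: "real^'n^'m"
  assumes "x \<in> prob_simplex" "y \<in> prob_simplex"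
  shows "vmin (x v* A) \<le> vmax (A *v y)"
proof -
  have "(\<Sum>q\<in>UNIV. y $ q * (x v* A) $ q) = (\<Sum>q\<in>UNIV. \<Sum>r\<in>UNIV. x $ r * (A $ r $ q * y $ q))"
    by (simp add: vector_matrix_mult_def sum_distrib_left mult_ac)
  also have "\<dots> = (\<Sum>r\<in>UNIV. \<Sum>q\<in>UNIV. x $ r * (A $ r $ q * y $ q))"
    by (rule sum.swap)
  also have "\<dots> = (\<Sum>r\<in>UNIV. x $ r * (A *v y) $ r)"
    by (simp add: matrix_vector_mult_def sum_distrib_left)
  finally show ?thesis
    using prob_simplex_weighted_sum_bounds(1)[OF assms(2), of "x v* A"]
      prob_simplex_weighted_sum_bounds(2)[OF assms(1), of "A *v y"] by linarith
qed

lemma vmin_le_game_value: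
  fixes A :: "real^'n^'m"
  assumes "x \<in> prob_simplex"
  shows "vmin (x v* A) \<le> game_value A"
proof -
  have "bdd_above ((\<lambda>x. vmin (x v* A)) ` prob_simplex)"
    using weak_duality[OF _ axis_in_prob_simplex] by (intro bdd_aboveI2) blast
  then show ?thesis unfolding game_value_def using assms by (rule cSUP_upper2) simp
qed

lemma game_value_le_vmax:
  fixes A :: "real^'n^'m"
  assumes "y \<in> prob_simplex"
  shows "game_value A \<le> vmax (A *v y)"
  unfolding game_value_def
  using axis_in_prob_simplex weak_duality[OF _ assms] by (intro cSUP_least) auto

section \<open>Rate of convergence\<close>

lemma system_gap_UNIV: "system_gap UNIV UNIV (\<lambda>r. u $ r) (\<lambda>q. v $ q) = vmax u - vmin v"
  unfolding system_gap_def vmax_def vmin_def ..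

lemma avg_duality_gap:
  "vmax (A *v avg y t) - vmin (avg x t v* A)
     = system_gap UNIV UNIV (\<lambda>r. (A *v (\<Sum>k=1..t. y k)) $ r) (\<lambda>q. ((\<Sum>k=1..t. x k) v* A) $ q) / real t"
  unfolding system_gap_UNIV avg_def matrix_vector_mult_scaleR vector_matrix_mult_scaleR
  by (simp add: vmax_scaleR vmin_scaleR diff_divide_distrib)

lemma AFP_cumulative_gap_rate:
  fixes A :: "real^'n^'m"
  assumes AFP: "is_AFP A x y x' y'"
  defines "K \<equiv> max 3 (CARD('m) + CARD('n))"
  shows "\<exists>C\<ge>0. \<forall>t\<ge>1. system_gap UNIV UNIV (\<lambda>r. (A *v (\<Sum>k=1..t. y k)) $ r) (\<lambda>q. ((\<Sum>k=1..t. x k) v* A) $ q)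
    \<le> C * real t powr ((real K - 3) / (real K - 2))"
proof -
  obtain ii jj where rows: "\<And>\<tau>. x (Suc \<tau>) = axis (ii \<tau>) 1" and cols: "\<And>\<tau>. y (Suc \<tau>) = axis (jj \<tau>) 1"
    using AFP_plays_pure[OF AFP] by blast
  define a0 where "a0 = (\<Sum>r\<in>UNIV. \<Sum>q\<in>UNIV. \<bar>A $ r $ q\<bar>)"
  have bound: "\<bar>A $ r $ q\<bar> \<le> a0" for r q
  proof -
    have "\<bar>A $ r $ q\<bar> \<le> (\<Sum>q\<in>UNIV. \<bar>A $ r $ q\<bar>)" by (rule member_le_sum) auto
    also have "\<dots> \<le> a0" unfolding a0_def by (rule member_le_sum) (auto intro: sum_nonneg)
    finally show ?thesis .
  qed
  then have "0 \<le> a0" by (meson abs_ge_zero order_trans)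
  then obtain C where "0 \<le> C"
    and growth: "gap_growth_bound a0 (2 * a0) (\<lambda>r q. A $ r $ q) K C ((real K - 3) / (real K - 2))"
    using gap_growth_bound_exists[of "2 * a0" a0 K] unfolding K_def by fastforce
  have "card (UNIV :: 'm set) + card (UNIV :: 'n set) \<le> K" unfolding K_def by simp
  moreover have "system_gap UNIV UNIV (\<lambda>r. (A *v (\<Sum>k=1..0. y k)) $ r) (\<lambda>q. ((\<Sum>k=1..0. x k) v* A) $ q) = 0"
    unfolding system_gap_UNIV by (simp add: vmax_def vmin_def)
  ultimately have "system_gap UNIV UNIV (\<lambda>r. (A *v (\<Sum>k=1..t. y k)) $ r) (\<lambda>q. ((\<Sum>k=1..t. x k) v* A) $ q)
      \<le> C * real t powr ((real K - 3) / (real K - 2))" if "1 \<le> t" for t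
    using growth[unfolded gap_growth_bound_def, rule_format, OF AFP_vector_system[OF AFP bound rows cols]]
      that by simp
  then show ?thesis using \<open>0 \<le> C\<close> by auto
qed

lemma AFP_duality_gap_rate:
  fixes A :: "real^'n^'m"
  assumes AFP: "is_AFP A x y x' y'"
  defines "K \<equiv> max 3 (CARD('m) + CARD('n))"
  shows "\<exists>C\<ge>0. \<forall>t\<ge>1. vmax (A *v avg y t) - vmin (avg x t v* A) \<le> C * real t powr (- 1 / (real K - 2))"
proof -
  obtain C where "0 \<le> C" and gap: "\<And>t. 1 \<le> t \<Longrightarrow>
    system_gap UNIV UNIV (\<lambda>r. (A *v (\<Sum>k=1..t. y k)) $ r) (\<lambda>q. ((\<Sum>k=1..t. x k) v* A) $ q)
      \<le> C * real t powr ((real K - 3) / (real K - 2))"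
    using AFP_cumulative_gap_rate[OF AFP, folded K_def] by blast
  have exponent: "(real K - 3) / (real K - 2) - 1 = - 1 / (real K - 2)"
    unfolding K_def by (simp add: field_simps)
  have "vmax (A *v avg y t) - vmin (avg x t v* A) \<le> C * real t powr (- 1 / (real K - 2))"
    if "1 \<le> t" for t
  proof -
    have "vmax (A *v avg y t) - vmin (avg x t v* A) \<le> C * real t powr ((real K - 3) / (real K - 2)) / t"
      unfolding avg_duality_gap by (rule divide_right_mono[OF gap[OF that]]) simp
    also have "\<dots> = C * real t powr (- 1 / (real K - 2))"
      using that unfolding exponent[symmetric] by (simp add: powr_diff)
    finally show ?thesis .
  qed
  then show ?thesis using \<open>0 \<le> C\<close> by auto
qed

lemma powr_exponent_max_3_le:
  fixes m n t :: nat
  assumes "1 \<le> t" "0 \<le> C" "1 \<le> m" "1 \<le> n"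
  shows "C * real t powr (- 1 / (real (max 3 (m + n)) - 2)) \<le> C * real t powr (- 1 / (real m + real n - 2))"
proof (cases "3 \<le> m + n")
  case False
  text \<open>Then \<open>m = n = 1\<close>, and the exponent \<open>-1 / 0\<close> on the right is \<open>0\<close> in Isabelle.\<close>
  then have "m = 1" "n = 1" using assms(3,4) by linarith+
  moreover have "C / real t \<le> C" using divide_left_mono[of 1 "real t" C] assms(1,2) by simp
  ultimately show ?thesis using \<open>1 \<le> t\<close> by simp
qed simp

lemma tendsto_sandwich_gap:
  fixes l u e :: "nat \<Rightarrow> real"
  assumes "\<And>t. 1 \<le> t \<Longrightarrow> l t \<le> v" "\<And>t. 1 \<le> t \<Longrightarrow> v \<le> u t"
    and "\<And>t. 1 \<le> t \<Longrightarrow> u t - l t \<le> e t" and "e \<longlonglongrightarrow> 0"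
  shows "l \<longlonglongrightarrow> v" "u \<longlonglongrightarrow> v"
proof -
  have ev: "eventually (\<lambda>t. 1 \<le> t) sequentially" by (rule eventually_ge_at_top)
  have lower: "v - e t \<le> l t" and upper: "u t \<le> v + e t" if "1 \<le> t" for t
    using assms(1-3)[OF that] by linarith+
  have "eventually (\<lambda>t. v - e t \<le> l t) sequentially" "eventually (\<lambda>t. u t \<le> v + e t) sequentially"
    and "eventually (\<lambda>t. l t \<le> v) sequentially" "eventually (\<lambda>t. v \<le> u t) sequentially"
    using eventually_mono[OF ev lower] eventually_mono[OF ev upper]
      eventually_mono[OF ev assms(1)] eventually_mono[OF ev assms(2)] by simp_all
  moreover have "(\<lambda>t. v - e t) \<longlonglongrightarrow> v" "(\<lambda>t. v + e t) \<longlonglongrightarrow> v"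
    using tendsto_diff[OF tendsto_const \<open>e \<longlonglongrightarrow> 0\<close>] tendsto_add[OF tendsto_const \<open>e \<longlonglongrightarrow> 0\<close>]
    by simp_all
  ultimately show "l \<longlonglongrightarrow> v" "u \<longlonglongrightarrow> v"
    using tendsto_sandwich[of "\<lambda>t. v - e t" l sequentially "\<lambda>_. v" v]
      tendsto_sandwich[of "\<lambda>_. v" u sequentially "\<lambda>t. v + e t" v] by simp_all
qed

theorem proposition1:
  fixes A :: "real^'n^'m"
    and x x' :: "nat \<Rightarrow> real^'m"
    and y y' :: "nat \<Rightarrow> real^'n"
  assumes "is_AFP A x y x' y'"
  shows "(\<lambda>t. vmin (avg x t v* A)) \<longlonglongrightarrow> game_value A
       \<and> (\<lambda>t. vmax (A *v avg y t)) \<longlonglongrightarrow> game_value A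
       \<and> (\<exists>C. \<forall>t\<ge>1. vmax (A *v avg y t) - vmin (avg x t v* A)
              \<le> C * real t powr (- 1 / (real CARD('m) + real CARD('n) - 2)))"
proof -
  define K where "K = max 3 (CARD('m) + CARD('n))"
  obtain C where "0 \<le> C" and rate:
    "\<And>t. 1 \<le> t \<Longrightarrow> vmax (A *v avg y t) - vmin (avg x t v* A) \<le> C * real t powr (- 1 / (real K - 2))"
    using AFP_duality_gap_rate[OF assms, folded K_def] by blast
  have "3 \<le> K" unfolding K_def by simp
  then have "- 1 / (real K - 2) < 0" by simp
  from tendsto_neg_powr[OF this filterlim_real_sequentially]
  have "(\<lambda>t. C * real t powr (- 1 / (real K - 2))) \<longlonglongrightarrow> 0"
    by (rule tendsto_mult_right_zero)
  note convergence = tendsto_sandwich_gap[OF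
      vmin_le_game_value[OF AFP_avg_in_prob_simplex(1)[OF assms]]
      game_value_le_vmax[OF AFP_avg_in_prob_simplex(2)[OF assms]] rate this]
  have "vmax (A *v avg y t) - vmin (avg x t v* A)
      \<le> C * real t powr (- 1 / (real CARD('m) + real CARD('n) - 2))" if "1 \<le> t" for t
    using rate[OF that] powr_exponent_max_3_le[OF that \<open>0 \<le> C\<close>, of "CARD('m)" "CARD('n)"]
    unfolding K_def by (simp add: Suc_le_eq)
  then show ?thesis using convergence by blast
qed

end
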